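(* For all Maya diagrams $\sigma,\sigma'$, \[ \langle\sigma',A^{-1}(x;t)\sigma\rangle=\sum_{h}\prod_{i\in\mathbb{Z}}\Omega(h_{i-1},\sigma_i,h_i,\sigma'_i), \] where the sum runs over all row configurations $h$ from $\sigma$ to $\sigma'$ and the vertex weights are $\omega_1=\omega_3=\omega_5=1$, $\omega_2=-tx$, $\omega_4=x$, $\omega_6=(1-t)x$.
   Context: Maya diagrams are maps $\sigma:\mathbb{Z}\to\{0,1\}$ with $\sigma_i=1$ for $i\ll0$ and $\sigma_i=0$ for $i\gg0$. $\mathcal{F}(t)$ is the $\mathbb{C}(t)$-space with basis the Maya diagrams, with the bilinear form $\langle\cdot,\cdot\rangle$ making them orthonormal. Operators: $\psi^+_i(t)\sigma=(\sigma+\epsilon_i)\prod_{j>i}(-t)^{\sigma_j}$ if $\sigma_i=0$, else $0$; $\psi^-_i(t)\sigma=(\sigma-\epsilon_i)\prod_{j>i}(-t)^{-\sigma_j}$ if $\sigma_i=1$, else $0$; $E_{ij}(t)=(1-t)\psi_i^-(t)\psi_j^+(t)$; $A(x;t)=1+\sum_{r>0}\sum_{i_1<j_1<\cdots<i_r<j_r}(xt)^{j_1-i_1+\cdots+j_r-i_r}E_{i_1j_1}(t)\cdots E_{i_rj_r}(t)$, and $A^{-1}(x;t)$ is its inverse as a formal power series in $x$ with coefficients in $\operatorname{End}\mathcal{F}(t)$. Six-vertex row configurations: the allowed vertices (W,N,E,S) and weights are $\Omega(0,0,0,0)=\omega_1$, $\Omega(1,1,1,1)=\omega_2$, $\Omega(0,1,0,1)=\omega_3$,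 $\Omega(1,0,1,0)=\omega_4$, $\Omega(1,0,0,1)=\omega_5$, $\Omega(0,1,1,0)=\omega_6$, all other tuples having weight $0$. A row configuration from $\sigma$ (top) to $\sigma'$ (bottom) is $h:\mathbb{Z}\to\{0,1\}$ with $h_i=0$ for $|i|$ large and $(h_{i-1},\sigma_i,h_i,\sigma'_i)$ allowed for every $i$. *)

theory Defs
  imports "HOL-Library.Groups_Big_Fun"
          "HOL-Computational_Algebra.Formal_Power_Series"
          "HOL-Computational_Algebra.Fraction_Field"
          "HOL-Computational_Algebra.Polynomial"
begin

text \<open>Maya diagrams: maps Z -> {0,1}, encoded as int => bool (True = 1),
  equal to 1 far to the left and to 0 far to the right.\<close>
definition is_maya :: "(int \<Rightarrow> bool) \<Rightarrow> bool" where
  "is_maya \<sigma> \<longleftrightarrow> (\<exists>N::int. \<forall>i. (i \<le> - N \<longrightarrow> \<sigma> i) \<and> (N \<le> i \<longrightarrow> \<not> \<sigma> i))"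

text \<open>Vectors: coefficient functions on Maya diagrams (the coordinate at tau is
  the pairing with the basis vector tau). Basis vector of a diagram:\<close>
definition basis_vec :: "(int \<Rightarrow> bool) \<Rightarrow> (int \<Rightarrow> bool) \<Rightarrow> 'a::zero_neq_one" where
  "basis_vec \<sigma> = (\<lambda>\<tau>. if \<tau> = \<sigma> then 1 else 0)"

text \<open>Fermionic operators, as linear extensions of their action on the basis:
  the coefficient of tau in psi v is read off from the unique preimage of tau.
  For a Maya diagram the product over j>i of (-t)^(sigma_j) is (-t)^(number of
  j > i with sigma_j = 1).\<close>
definition psi_plus :: "'a::field \<Rightarrow> int \<Rightarrow> ((int \<Rightarrow> bool) \<Rightarrow> 'a) \<Rightarrow> ((int \<Rightarrow> bool) \<Rightarrow> 'a)" where
  "psi_plus t i v = (\<lambda>\<tau>. if \<tau> i then (- t) ^ card {j. i < j \<and> \<tau> j} * v (\<tau>(i := False)) else 0)"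

definition psi_minus :: "'a::field \<Rightarrow> int \<Rightarrow> ((int \<Rightarrow> bool) \<Rightarrow> 'a) \<Rightarrow> ((int \<Rightarrow> bool) \<Rightarrow> 'a)" where
  "psi_minus t i v = (\<lambda>\<tau>. if \<not> \<tau> i then inverse ((- t) ^ card {j. i < j \<and> \<tau> j}) * v (\<tau>(i := True)) else 0)"

definition E_op :: "'a::field \<Rightarrow> int \<Rightarrow> int \<Rightarrow> ((int \<Rightarrow> bool) \<Rightarrow> 'a) \<Rightarrow> ((int \<Rightarrow> bool) \<Rightarrow> 'a)" where
  "E_op t i j v = (\<lambda>\<tau>. (1 - t) * psi_minus t i (psi_plus t j v) \<tau>)"

definition E_prod :: "'a::field \<Rightarrow> (int \<times> int) list \<Rightarrow> ((int \<Rightarrow> bool) \<Rightarrow> 'a) \<Rightarrow> ((int \<Rightarrow> bool) \<Rightarrow> 'a)" where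
  "E_prod t ps v = foldr (\<lambda>(i, j) w. E_op t i j w) ps v"

definition chain_ok :: "(int \<times> int) list \<Rightarrow> bool" where
  "chain_ok ps \<longleftrightarrow> sorted_wrt (<) (concat (map (\<lambda>(i, j). [i, j]) ps))"

definition chain_deg :: "(int \<times> int) list \<Rightarrow> int" where
  "chain_deg ps = (\<Sum>(i, j)\<leftarrow>ps. j - i)"

definition A_coeff :: "'a::field \<Rightarrow> nat \<Rightarrow> ((int \<Rightarrow> bool) \<Rightarrow> 'a) \<Rightarrow> ((int \<Rightarrow> bool) \<Rightarrow> 'a)" where
  "A_coeff t n v = (\<lambda>\<tau>. Sum_any (\<lambda>ps. if chain_ok ps \<and> chain_deg ps = int n
        then t ^ n * E_prod t ps v \<tau> else 0))"

text \<open>Coefficients of A^{-1}(x;t): the inverse B of A in the formal power series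
  ring, determined by A B = 1, i.e. B_0 = 1 and B_n = - sum_{k<n} A_{n-k} B_k.\<close>
fun Ainv_coeff :: "'a::field \<Rightarrow> nat \<Rightarrow> ((int \<Rightarrow> bool) \<Rightarrow> 'a) \<Rightarrow> ((int \<Rightarrow> bool) \<Rightarrow> 'a)" where
  "Ainv_coeff t 0 v = v"
| "Ainv_coeff t (Suc n) v =
     (\<lambda>\<tau>. - (\<Sum>k<Suc n. A_coeff t (Suc n - k) (Ainv_coeff t k v) \<tau>))"

definition Ainv_matrix :: "'a::field \<Rightarrow> (int \<Rightarrow> bool) \<Rightarrow> (int \<Rightarrow> bool) \<Rightarrow> 'a fps" where
  "Ainv_matrix t \<sigma>' \<sigma> = Abs_fps (\<lambda>n. Ainv_coeff t n (basis_vec \<sigma>) \<sigma>')"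

definition Omega :: "'b \<Rightarrow> 'b \<Rightarrow> 'b \<Rightarrow> 'b \<Rightarrow> 'b \<Rightarrow> 'b \<Rightarrow> bool \<Rightarrow> bool \<Rightarrow> bool \<Rightarrow> bool \<Rightarrow> 'b::zero" where
  "Omega w1 w2 w3 w4 w5 w6 W N E S =
     (if (W, N, E, S) = (False, False, False, False) then w1
      else if (W, N, E, S) = (True, True, True, True) then w2
      else if (W, N, E, S) = (False, True, False, True) then w3
      else if (W, N, E, S) = (True, False, True, False) then w4
      else if (W, N, E, S) = (True, False, False, True) then w5
      else if (W, N, E, S) = (False, True, True, False) then w6
      else 0)"

definition allowed_vertex :: "bool \<Rightarrow> bool \<Rightarrow> bool \<Rightarrow> bool \<Rightarrow> bool" where
  "allowed_vertex W N E S \<longleftrightarrow> (W, N, E, S) \<in>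
     {(False, False, False, False), (True, True, True, True), (False, True, False, True),
      (True, False, True, False), (True, False, False, True), (False, True, True, False)}"

definition row_config :: "(int \<Rightarrow> bool) \<Rightarrow> (int \<Rightarrow> bool) \<Rightarrow> (int \<Rightarrow> bool) \<Rightarrow> bool" where
  "row_config \<sigma> \<sigma>' h \<longleftrightarrow> finite {i. h i} \<and>
     (\<forall>i. allowed_vertex (h (i - 1)) (\<sigma> i) (h i) (\<sigma>' i))"

definition t_var :: "complex poly fract" where
  "t_var = Fract [:0, 1:] 1"

definition Omega_cor :: "bool \<Rightarrow> bool \<Rightarrow> bool \<Rightarrow> bool \<Rightarrow> complex poly fract fps" where
  "Omega_cor = Omega 1 (- (fps_const t_var * fps_X)) 1 fps_X 1 (fps_const (1 - t_var) * fps_X)"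

end

theory Submission
  imports Defs "HOL-Library.Infinite_Set"
begin

text \<open>Both A(x;t) and the right-hand side are row transfer matrices of six-vertex models:
  expanding the operators E_ij, the matrix element of A(x;t) is the partition function of a
  row with weights (1, -x, 1, tx, 1, -(1-t)x), because the signs (-t)^(...) collected by a
  particle jumping from i to j factor into a local weight -1 for every occupied and t for every
  empty site it passes. Stacking this row below a row with the weights of the corollary and
  summing over the diagram in between, the local weights cancel site by site, so the product
  of the two transfer matrices is the identity. Hence the right-hand side satisfies the
  recursion defining the coefficients of A^{-1}(x;t).\<close>

section \<open>Row transfer matrices\<close>

definition agree_outside :: "int set \<Rightarrow> (int \<Rightarrow> bool) \<Rightarrow> (int \<Rightarrow> bool) set" where
  "agree_outside S \<beta> = {\<tau>. \<forall>k. k \<notin> S \<longrightarrow> \<tau> k = \<beta> k}"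

lemma agree_outside_empty [simp]: "agree_outside {} \<beta> = {\<beta>}"
  by (auto simp: agree_outside_def)

lemma finite_agree_outside:
  assumes "finite S"
  shows "finite (agree_outside S \<beta>)"
proof -
  have "agree_outside S \<beta> \<subseteq> (\<lambda>A k. if k \<in> S then k \<in> A else \<beta> k) ` Pow S"
  proof
    fix \<tau> assume "\<tau> \<in> agree_outside S \<beta>"
    then have "\<tau> = (\<lambda>k. if k \<in> S then k \<in> {k\<in>S. \<tau> k} else \<beta> k)"
      by (auto simp: agree_outside_def)
    then show "\<tau> \<in> (\<lambda>A k. if k \<in> S then k \<in> A else \<beta> k) ` Pow S" by blast
  qed
  then show ?thesis
    using assms by (meson finite_Pow_iff finite_imageI finite_subset)
qed

lemma sum_agree_outside_insert:
  assumes "p \<notin> S" "finite S"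
  shows "(\<Sum>\<tau>\<in>agree_outside (insert p S) \<beta>. F \<tau>) =
    (\<Sum>c\<in>UNIV. \<Sum>\<tau>\<in>agree_outside S (\<beta>(p := c)). F \<tau>)"
proof -
  have "agree_outside (insert p S) \<beta> = agree_outside S (\<beta>(p := False)) \<union> agree_outside S (\<beta>(p := True))"
    and "agree_outside S (\<beta>(p := False)) \<inter> agree_outside S (\<beta>(p := True)) = {}"
    using assms(1) by (auto simp: agree_outside_def)
  then show ?thesis
    by (simp add: sum.union_disjoint finite_agree_outside assms(2) UNIV_bool)
qed

lemma sum_agree_outside_upd:
  assumes "p \<notin> S" "\<And>\<tau>. F (\<tau>(p := c)) = F \<tau>"
  shows "(\<Sum>\<tau>\<in>agree_outside S (\<beta>(p := c)). F \<tau>) = (\<Sum>\<tau>\<in>agree_outside S \<beta>. F \<tau>)"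
proof -
  have "agree_outside S (\<beta>(p := c)) = (\<lambda>\<tau>. \<tau>(p := c)) ` agree_outside S \<beta>"
  proof (intro equalityI subsetI)
    fix \<tau> assume "\<tau> \<in> agree_outside S (\<beta>(p := c))"
    then have "\<tau> = (\<tau>(p := \<beta> p))(p := c)" "\<tau>(p := \<beta> p) \<in> agree_outside S \<beta>"
      using assms(1) by (auto simp: agree_outside_def fun_eq_iff)
    then show "\<tau> \<in> (\<lambda>\<tau>. \<tau>(p := c)) ` agree_outside S \<beta>" by blast
  qed (auto simp: agree_outside_def)
  moreover have "inj_on (\<lambda>\<tau>. \<tau>(p := c)) (agree_outside S \<beta>)"
  proof (rule inj_onI, rule ext)
    fix x y k assume x: "x \<in> agree_outside S \<beta>" and y: "y \<in> agree_outside S \<beta>"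
      and xy: "x(p := c) = y(p := c)"
    show "x k = y k"
    proof (cases "k = p")
      case True
      then show ?thesis using x y assms(1) by (simp add: agree_outside_def)
    next
      case False
      then show ?thesis using fun_cong[OF xy, of k] by simp
    qed
  qed
  ultimately show ?thesis
    using assms(2) by (simp add: sum.reindex)
qed

lemma atLeastLessThan_Suc_insert: "{p..<p + int (Suc n)} = insert p {p+1..<(p+1) + int n}"
  by auto

text \<open>The weight of the sites p, ..., p+n-1 of a row with top diagram \<sigma> and bottom
  diagram \<tau>, summed over the horizontal edges, with entering edge h and empty leaving edge.\<close>
fun row_weight :: "(bool \<Rightarrow> bool \<Rightarrow> bool \<Rightarrow> bool \<Rightarrow> 'b::comm_semiring_1) \<Rightarrow> nat \<Rightarrow> int \<Rightarrow> bool \<Rightarrow>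
    (int \<Rightarrow> bool) \<Rightarrow> (int \<Rightarrow> bool) \<Rightarrow> 'b" where
  "row_weight \<Omega> 0 p h \<sigma> \<tau> = (if h then 0 else 1)"
| "row_weight \<Omega> (Suc n) p h \<sigma> \<tau> =
     \<Omega> h (\<sigma> p) False (\<tau> p) * row_weight \<Omega> n (p+1) False \<sigma> \<tau>
   + \<Omega> h (\<sigma> p) True (\<tau> p) * row_weight \<Omega> n (p+1) True \<sigma> \<tau>"

lemma row_weight_Suc_sum:
  "row_weight \<Omega> (Suc n) p h \<sigma> \<tau> = (\<Sum>e\<in>UNIV. \<Omega> h (\<sigma> p) e (\<tau> p) * row_weight \<Omega> n (p+1) e \<sigma> \<tau>)"
  by (simp add: UNIV_bool add.commute)

lemma row_weight_cong:
  assumes "\<And>k. p \<le> k \<Longrightarrow> k < p + int n \<Longrightarrow> \<sigma> k = \<sigma>' k \<and> \<tau> k = \<tau>' k"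
  shows "row_weight \<Omega> n p h \<sigma> \<tau> = row_weight \<Omega> n p h \<sigma>' \<tau>'"
  using assms
proof (induction n arbitrary: p h)
  case 0
  then show ?case by simp
next
  case (Suc n)
  have "row_weight \<Omega> n (p+1) e \<sigma> \<tau> = row_weight \<Omega> n (p+1) e \<sigma>' \<tau>'" for e
    using Suc.prems by (intro Suc.IH) auto
  moreover have "\<sigma> p = \<sigma>' p" "\<tau> p = \<tau>' p"
    using Suc.prems[of p] by auto
  ultimately show ?case by simp
qed

lemma row_weight_upd_top: "q < p \<Longrightarrow> row_weight \<Omega> n p h (\<sigma>(q := c)) \<tau> = row_weight \<Omega> n p h \<sigma> \<tau>"
  by (rule row_weight_cong) auto

lemma row_weight_upd_bottom: "q < p \<Longrightarrow> row_weight \<Omega> n p h \<sigma> (\<tau>(q := c)) = row_weight \<Omega> n p h \<sigma> \<tau>"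
  by (rule row_weight_cong) auto

lemma allowed_vertex_east_unique: "allowed_vertex W N E S \<Longrightarrow> allowed_vertex W N E' S \<Longrightarrow> E = E'"
  unfolding allowed_vertex_def by auto

lemma allowed_vertex_occupied: "allowed_vertex W True E True \<Longrightarrow> W = E"
  unfolding allowed_vertex_def by auto

lemma allowed_vertex_empty: "allowed_vertex W False E False \<Longrightarrow> W = E"
  unfolding allowed_vertex_def by auto

lemma allowed_vertex_no_edges: "allowed_vertex False N False S \<longleftrightarrow> N = S"
  unfolding allowed_vertex_def by auto

lemma Omega_nonzero_imp_allowed: "Omega w1 w2 w3 w4 w5 w6 W N E S \<noteq> 0 \<Longrightarrow> allowed_vertex W N E S"
  unfolding allowed_vertex_def Omega_def by (auto split: if_splits)

lemma row_weight_eq_prod: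
  fixes \<Omega> :: "bool \<Rightarrow> bool \<Rightarrow> bool \<Rightarrow> bool \<Rightarrow> 'b::comm_semiring_1"
  assumes \<Omega>: "\<And>W N E S. \<Omega> W N E S \<noteq> 0 \<Longrightarrow> allowed_vertex W N E S"
    and "\<forall>k. p \<le> k \<and> k < p + int n \<longrightarrow> allowed_vertex (h (k-1)) (\<sigma> k) (h k) (\<tau> k)"
    and "\<not> h (p + int n - 1)"
  shows "row_weight \<Omega> n p (h (p-1)) \<sigma> \<tau> = (\<Prod>k\<in>{p..<p+int n}. \<Omega> (h (k-1)) (\<sigma> k) (h k) (\<tau> k))"
  using assms(2,3)
proof (induction n arbitrary: p)
  case 0
  then show ?case by simp
next
  case (Suc n)
  have allowed: "allowed_vertex (h (p-1)) (\<sigma> p) (h p) (\<tau> p)"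
    using Suc.prems(1) by auto
  have IH: "row_weight \<Omega> n (p+1) (h p) \<sigma> \<tau> = (\<Prod>k\<in>{p+1..<p+1+int n}. \<Omega> (h (k-1)) (\<sigma> k) (h k) (\<tau> k))"
    using Suc.IH[of "p+1"] Suc.prems by auto
  have "\<Omega> (h (p-1)) (\<sigma> p) (\<not> h p) (\<tau> p) = 0"
    using \<Omega> allowed_vertex_east_unique[OF allowed] by (metis (full_types))
  then have "row_weight \<Omega> (Suc n) p (h (p-1)) \<sigma> \<tau> = \<Omega> (h (p-1)) (\<sigma> p) (h p) (\<tau> p) * row_weight \<Omega> n (p+1) (h p) \<sigma> \<tau>"
    by (cases "h p") simp_all
  also have "\<dots> = (\<Prod>k\<in>{p..<p+int (Suc n)}. \<Omega> (h (k-1)) (\<sigma> k) (h k) (\<tau> k))"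
    unfolding IH atLeastLessThan_Suc_insert by (subst prod.insert) auto
  finally show ?case .
qed

lemma row_weight_nonzero_imp_edges:
  fixes \<Omega> :: "bool \<Rightarrow> bool \<Rightarrow> bool \<Rightarrow> bool \<Rightarrow> 'b::comm_semiring_1"
  assumes \<Omega>: "\<And>W N E S. \<Omega> W N E S \<noteq> 0 \<Longrightarrow> allowed_vertex W N E S"
  shows "row_weight \<Omega> n p h\<^sub>0 \<sigma> \<tau> \<noteq> 0 \<Longrightarrow> \<exists>h. h (p-1) = h\<^sub>0 \<and>
     (\<forall>k. p \<le> k \<and> k < p + int n \<longrightarrow> allowed_vertex (h (k-1)) (\<sigma> k) (h k) (\<tau> k)) \<and>
     (\<forall>k. h k \<longrightarrow> p - 1 \<le> k \<and> k < p + int n - 1)"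
proof (induction n arbitrary: p h\<^sub>0)
  case 0
  then have "\<not> h\<^sub>0" by (auto split: if_splits)
  then show ?case by (intro exI[of _ "\<lambda>_. False"]) auto
next
  case (Suc n)
  obtain e where e: "\<Omega> h\<^sub>0 (\<sigma> p) e (\<tau> p) \<noteq> 0" "row_weight \<Omega> n (p+1) e \<sigma> \<tau> \<noteq> 0"
    using Suc.prems by (metis mult_zero_left mult_zero_right add_0 row_weight.simps(2))
  obtain h' where h': "h' p = e"
    "\<forall>k. p + 1 \<le> k \<and> k < p + 1 + int n \<longrightarrow> allowed_vertex (h' (k-1)) (\<sigma> k) (h' k) (\<tau> k)"
    "\<forall>k. h' k \<longrightarrow> p \<le> k \<and> k < p + int n"
    using Suc.IH[OF e(2)] by auto
  have "allowed_vertex ((h'(p - 1 := h\<^sub>0)) (k-1)) (\<sigma> k) ((h'(p - 1 := h\<^sub>0)) k) (\<tau> k)"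
    if "p \<le> k" "k < p + int (Suc n)" for k
  proof (cases "k = p")
    case True
    then show ?thesis using \<Omega>[OF e(1)] h'(1) by simp
  next
    case False
    then show ?thesis using h'(2) that by auto
  qed
  moreover have "\<forall>k. (h'(p - 1 := h\<^sub>0)) k \<longrightarrow> p - 1 \<le> k \<and> k < p + int (Suc n) - 1"
    using h'(3) by auto
  ultimately show ?case
    by (intro exI[of _ "h'(p - 1 := h\<^sub>0)"]) simp
qed

definition row_partition :: "(bool \<Rightarrow> bool \<Rightarrow> bool \<Rightarrow> bool \<Rightarrow> 'b::comm_semiring_1) \<Rightarrow>
    (int \<Rightarrow> bool) \<Rightarrow> (int \<Rightarrow> bool) \<Rightarrow> 'b" where
  "row_partition \<Omega> \<sigma> \<tau> = Sum_any (\<lambda>h. if row_config \<sigma> \<tau> h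
     then Prod_any (\<lambda>i. \<Omega> (h (i - 1)) (\<sigma> i) (h i) (\<tau> i)) else 0)"

definition frozen_outside :: "int \<Rightarrow> int \<Rightarrow> (int \<Rightarrow> bool) \<Rightarrow> bool" where
  "frozen_outside a b \<sigma> \<longleftrightarrow> (\<forall>k<a. \<sigma> k) \<and> (\<forall>k\<ge>b. \<not> \<sigma> k)"

lemma frozen_outside_eq_iff:
  "frozen_outside a b \<sigma> \<Longrightarrow> frozen_outside a b \<tau> \<Longrightarrow> (\<forall>k\<in>{a..<b}. \<sigma> k = \<tau> k) \<longleftrightarrow> \<sigma> = \<tau>"
  unfolding frozen_outside_def fun_eq_iff by (metis atLeastLessThan_iff linorder_not_le)

lemma maya_common_window:
  assumes "is_maya \<sigma>" "is_maya \<sigma>'"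
  obtains a b where "a \<le> b" "frozen_outside a b \<sigma>" "frozen_outside a b \<sigma>'"
proof -
  obtain N1 where N1: "\<forall>i. (i \<le> - N1 \<longrightarrow> \<sigma> i) \<and> (N1 \<le> i \<longrightarrow> \<not> \<sigma> i)"
    using assms(1) by (auto simp: is_maya_def)
  obtain N2 where N2: "\<forall>i. (i \<le> - N2 \<longrightarrow> \<sigma>' i) \<and> (N2 \<le> i \<longrightarrow> \<not> \<sigma>' i)"
    using assms(2) by (auto simp: is_maya_def)
  define N where "N = max (max N1 N2) 0"
  have "- N \<le> N" "frozen_outside (- N) N \<sigma>" "frozen_outside (- N) N \<sigma>'"
    using N1 N2 unfolding N_def frozen_outside_def by auto
  then show ?thesis using that by blast
qed

lemma is_maya_finite_diff:
  assumes "is_maya \<sigma>" "finite {i. \<sigma> i \<noteq> \<tau> i}"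
  shows "is_maya \<tau>"
proof -
  obtain N where N: "\<forall>i. (i \<le> - N \<longrightarrow> \<sigma> i) \<and> (N \<le> i \<longrightarrow> \<not> \<sigma> i)"
    using assms(1) by (auto simp: is_maya_def)
  obtain K where K: "abs ` {i. \<sigma> i \<noteq> \<tau> i} \<subseteq> {..K}"
    using assms(2) finite_int_iff_bounded_le by blast
  define M where "M = max N (K + 1)"
  have "\<tau> i = \<sigma> i" if "i \<le> - M \<or> M \<le> i" for i
  proof -
    have "K < \<bar>i\<bar>" using that by (auto simp: M_def)
    then show ?thesis using K by fastforce
  qed
  then have "\<forall>i. (i \<le> - M \<longrightarrow> \<tau> i) \<and> (M \<le> i \<longrightarrow> \<not> \<tau> i)"
    using N by (auto simp: M_def)
  then show ?thesis
    unfolding is_maya_def by blast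
qed

lemma row_config_finite_diff:
  assumes "row_config \<sigma> \<tau> h"
  shows "finite {i. \<sigma> i \<noteq> \<tau> i}"
proof -
  have "{i. \<sigma> i \<noteq> \<tau> i} \<subseteq> {i. h i} \<union> (\<lambda>i. i + 1) ` {i. h i}"
  proof
    fix i assume "i \<in> {i. \<sigma> i \<noteq> \<tau> i}"
    moreover have "allowed_vertex (h (i - 1)) (\<sigma> i) (h i) (\<tau> i)"
      using assms by (simp add: row_config_def)
    ultimately have "h (i - 1) \<or> h i"
      by (auto simp: allowed_vertex_def)
    then show "i \<in> {i. h i} \<union> (\<lambda>i. i + 1) ` {i. h i}"
      by (auto intro: image_eqI[of _ _ "i - 1"])
  qed
  then show ?thesis
    using assms by (auto simp: row_config_def intro: finite_subset)
qed

lemma row_config_imp_maya: "row_config \<sigma> \<tau> h \<Longrightarrow> is_maya \<sigma> \<Longrightarrow> is_maya \<tau>"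
  using is_maya_finite_diff row_config_finite_diff by blast

lemma row_config_unique:
  assumes "row_config \<sigma> \<tau> h1" "row_config \<sigma> \<tau> h2"
  shows "h1 = h2"
proof -
  have allowed: "allowed_vertex (h1 (i - 1)) (\<sigma> i) (h1 i) (\<tau> i)"
    "allowed_vertex (h2 (i - 1)) (\<sigma> i) (h2 i) (\<tau> i)" for i
    using assms by (auto simp: row_config_def)
  obtain K where K: "abs ` ({i. h1 i} \<union> {i. h2 i}) \<subseteq> {..K}"
    using assms finite_int_iff_bounded_le by (metis finite_Un row_config_def)
  have right: "h1 k = h2 k" if "- K - 1 \<le> k" for k
    using that
  proof (induction k rule: int_ge_induct)
    case base
    have "\<not> K < \<bar>- K - 1\<bar>" if "h1 (- K - 1) \<or> h2 (- K - 1)"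
      using K that by force
    then show ?case by force
  next
    case (step i)
    then show ?case
      using allowed_vertex_east_unique allowed[of "i + 1"] by simp
  qed
  have left: "\<not> h1 k \<and> \<not> h2 k" if "k < - K - 1" for k
    using K that by force
  show ?thesis
  proof
    fix k
    show "h1 k = h2 k"
      using left[of k] right[of k] by (cases "- K - 1 \<le> k") auto
  qed
qed

lemma finite_support_constant_below:
  fixes h :: "int \<Rightarrow> bool"
  assumes "finite {i. h i}" "\<And>i. i < a \<Longrightarrow> h (i - 1) = h i" "k < a"
  shows "\<not> h k"
proof
  assume "h k"
  have "h (k - int m)" for m
  proof (induction m)
    case 0
    then show ?case using \<open>h k\<close> by simp
  next
    case (Suc m)
    then show ?case
      using assms(2)[of "k - int m"] assms(3) by (simp add: algebra_simps)
  qed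
  then have "range (\<lambda>m::nat. k - int m) \<subseteq> {i. h i}" by auto
  moreover have "inj (\<lambda>m::nat. k - int m)" by (rule injI) auto
  ultimately show False
    using assms(1) by (meson finite_imageD finite_subset infinite_UNIV_nat)
qed

lemma finite_support_constant_above:
  fixes h :: "int \<Rightarrow> bool"
  assumes "finite {i. h i}" "\<And>i. b \<le> i \<Longrightarrow> h (i - 1) = h i" "b - 1 \<le> k"
  shows "\<not> h k"
proof -
  have "finite {i. h (- i)}"
    using finite_vimageI[OF assms(1), of uminus] by (simp add: vimage_def)
  moreover have "h (- (i - 1)) = h (- i)" if "i < 2 - b" for i
    using assms(2)[of "1 - i"] that by simp
  ultimately show ?thesis
    using finite_support_constant_below[of "\<lambda>i. h (- i)" "2 - b" "- k"] assms(3) by simp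
qed

lemma row_config_frozen_edges:
  assumes rc: "row_config \<sigma> \<tau> h" and \<sigma>: "frozen_outside a b \<sigma>" and \<tau>: "frozen_outside a b \<tau>"
  shows "k < a \<Longrightarrow> \<not> h k" and "b - 1 \<le> k \<Longrightarrow> \<not> h k"
proof -
  have fin: "finite {i. h i}" and allowed: "\<And>i. allowed_vertex (h (i - 1)) (\<sigma> i) (h i) (\<tau> i)"
    using rc by (auto simp: row_config_def)
  have "h (i - 1) = h i" if "i < a" for i
    using allowed[of i] allowed_vertex_occupied \<sigma> \<tau> that by (simp add: frozen_outside_def)
  then show "k < a \<Longrightarrow> \<not> h k"
    using finite_support_constant_below[OF fin] by blast
  have "h (i - 1) = h i" if "b \<le> i" for i
    using allowed[of i] allowed_vertex_empty \<sigma> \<tau> that by (simp add: frozen_outside_def)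
  then show "b - 1 \<le> k \<Longrightarrow> \<not> h k"
    using finite_support_constant_above[OF fin] by blast
qed

lemma row_partition_row_config:
  assumes "row_config \<sigma> \<tau> h"
  shows "row_partition \<Omega> \<sigma> \<tau> = Prod_any (\<lambda>i. \<Omega> (h (i - 1)) (\<sigma> i) (h i) (\<tau> i))"
proof -
  have "row_partition \<Omega> \<sigma> \<tau> = (\<Sum>h'\<in>{h}. if row_config \<sigma> \<tau> h'
      then Prod_any (\<lambda>i. \<Omega> (h' (i - 1)) (\<sigma> i) (h' i) (\<tau> i)) else 0)"
    unfolding row_partition_def
    by (rule Sum_any.expand_superset) (use row_config_unique[OF assms] in auto)
  then show ?thesis
    using assms by simp
qed

lemma Prod_any_row_config_window:
  assumes rc: "row_config \<sigma> \<tau> h" and \<sigma>: "frozen_outside a b \<sigma>" and \<tau>: "frozen_outside a b \<tau>"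
    and \<Omega>1: "\<Omega> False True False True = 1" "\<Omega> False False False False = 1"
  shows "Prod_any (\<lambda>i. \<Omega> (h (i - 1)) (\<sigma> i) (h i) (\<tau> i)) =
    (\<Prod>i\<in>{a..<b}. \<Omega> (h (i - 1)) (\<sigma> i) (h i) (\<tau> i))"
proof (rule Prod_any.expand_superset)
  note left = row_config_frozen_edges(1)[OF rc \<sigma> \<tau>]
    and right = row_config_frozen_edges(2)[OF rc \<sigma> \<tau>]
  show "{i. \<Omega> (h (i - 1)) (\<sigma> i) (h i) (\<tau> i) \<noteq> 1} \<subseteq> {a..<b}"
  proof (rule subsetI, rule ccontr)
    fix i assume ne: "i \<in> {i. \<Omega> (h (i - 1)) (\<sigma> i) (h i) (\<tau> i) \<noteq> 1}" and "i \<notin> {a..<b}"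
    then consider "i < a" | "b \<le> i" by fastforce
    then show False
    proof cases
      case 1
      then show False
        using ne left[of i] left[of "i - 1"] \<sigma> \<tau> \<Omega>1 by (simp add: frozen_outside_def)
    next
      case 2
      then show False
        using ne right[of i] right[of "i - 1"] \<sigma> \<tau> \<Omega>1 by (simp add: frozen_outside_def)
    qed
  qed
qed simp

lemma row_weight_nonzero_imp_row_config:
  fixes \<Omega> :: "bool \<Rightarrow> bool \<Rightarrow> bool \<Rightarrow> bool \<Rightarrow> 'b::comm_semiring_1"
  assumes \<Omega>: "\<And>W N E S. \<Omega> W N E S \<noteq> 0 \<Longrightarrow> allowed_vertex W N E S"
    and \<sigma>: "frozen_outside a b \<sigma>" and \<tau>: "frozen_outside a b \<tau>" and "a \<le> b"
    and "row_weight \<Omega> (nat (b - a)) a False \<sigma> \<tau> \<noteq> 0"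
  shows "\<exists>h. row_config \<sigma> \<tau> h"
proof -
  obtain h where h: "\<not> h (a - 1)"
    "\<forall>k. a \<le> k \<and> k < b \<longrightarrow> allowed_vertex (h (k - 1)) (\<sigma> k) (h k) (\<tau> k)"
    "\<forall>k. h k \<longrightarrow> a - 1 \<le> k \<and> k < b - 1"
    using row_weight_nonzero_imp_edges[OF \<Omega> assms(5)] \<open>a \<le> b\<close> by auto
  have "finite {i. h i}"
    using h(3) by (auto intro: finite_subset[of _ "{a - 1..<b - 1}"])
  moreover have "allowed_vertex (h (i - 1)) (\<sigma> i) (h i) (\<tau> i)" for i
  proof (cases "a \<le> i \<and> i < b")
    case True
    then show ?thesis using h(2) by auto
  next
    case False
    then consider "i < a" | "b \<le> i" by fastforce
    then have "\<not> h (i - 1) \<and> \<not> h i \<and> \<sigma> i = \<tau> i"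
    proof cases
      case 1
      then have "\<not> h i"
        using h(1,3) by (cases "i = a - 1") auto
      then show ?thesis
        using 1 h(3) \<sigma> \<tau> by (auto simp: frozen_outside_def)
    next
      case 2
      then show ?thesis
        using h(3) \<sigma> \<tau> by (auto simp: frozen_outside_def)
    qed
    then show ?thesis using allowed_vertex_no_edges by simp
  qed
  ultimately show ?thesis
    unfolding row_config_def by blast
qed

text \<open>Outside a window where both diagrams are frozen all vertices are empty or fully occupied,
  so for weights normalized on these two vertices the partition function is a finite
  transfer-matrix weight.\<close>
lemma row_partition_eq_row_weight:
  fixes \<Omega> :: "bool \<Rightarrow> bool \<Rightarrow> bool \<Rightarrow> bool \<Rightarrow> 'b::comm_semiring_1"
  assumes \<Omega>: "\<And>W N E S. \<Omega> W N E S \<noteq> 0 \<Longrightarrow> allowed_vertex W N E S"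
    and \<Omega>1: "\<Omega> False True False True = 1" "\<Omega> False False False False = 1"
    and \<sigma>: "frozen_outside a b \<sigma>" and \<tau>: "frozen_outside a b \<tau>" and "a \<le> b"
  shows "row_partition \<Omega> \<sigma> \<tau> = row_weight \<Omega> (nat (b - a)) a False \<sigma> \<tau>"
proof (cases "\<exists>h. row_config \<sigma> \<tau> h")
  case True
  then obtain h where rc: "row_config \<sigma> \<tau> h" by blast
  note left = row_config_frozen_edges(1)[OF rc \<sigma> \<tau>]
    and right = row_config_frozen_edges(2)[OF rc \<sigma> \<tau>]
  have "row_partition \<Omega> \<sigma> \<tau> = (\<Prod>i\<in>{a..<b}. \<Omega> (h (i - 1)) (\<sigma> i) (h i) (\<tau> i))"
    unfolding row_partition_row_config[OF rc] by (rule Prod_any_row_config_window[where \<Omega> = \<Omega>, OF rc \<sigma> \<tau> \<Omega>1])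
  also have "\<dots> = row_weight \<Omega> (nat (b - a)) a (h (a - 1)) \<sigma> \<tau>"
    using \<open>a \<le> b\<close> rc right[of "b - 1"] by (subst row_weight_eq_prod[OF \<Omega>]) (auto simp: row_config_def)
  finally show ?thesis
    using left[of "a - 1"] by simp
next
  case False
  then show ?thesis
    using row_weight_nonzero_imp_row_config[OF \<Omega> \<sigma> \<tau> \<open>a \<le> b\<close>] by (auto simp: row_partition_def)
qed

lemma row_partition_nonmaya:
  assumes "is_maya \<sigma>" "\<not> is_maya \<tau>"
  shows "row_partition \<Omega> \<sigma> \<tau> = 0"
proof -
  have "\<not> row_config \<sigma> \<tau> h" for h
    using assms row_config_imp_maya by blast
  then show ?thesis
    by (simp add: row_partition_def)
qed

section \<open>Two rows with cancelling weights\<close>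

definition omega_Ainv :: "'a::field \<Rightarrow> bool \<Rightarrow> bool \<Rightarrow> bool \<Rightarrow> bool \<Rightarrow> 'a fps" where
  "omega_Ainv t = Omega 1 (- (fps_const t * fps_X)) 1 fps_X 1 (fps_const (1 - t) * fps_X)"

text \<open>A(x;t) is the row transfer matrix of these weights, see chain_action_eq_row_action.\<close>
definition omega_A :: "'a::field \<Rightarrow> bool \<Rightarrow> bool \<Rightarrow> bool \<Rightarrow> bool \<Rightarrow> 'a fps" where
  "omega_A t = Omega 1 (- fps_X) 1 (fps_const t * fps_X) 1 (- (fps_const (1 - t) * fps_X))"

lemma Omega_cor_eq_omega_Ainv: "Omega_cor = omega_Ainv t_var"
  by (simp add: Omega_cor_def omega_Ainv_def)

lemma row_partition_omega_Ainv:
  assumes "frozen_outside a b \<sigma>" "frozen_outside a b \<tau>" "a \<le> b"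
  shows "row_partition (omega_Ainv t) \<sigma> \<tau> = row_weight (omega_Ainv t) (nat (b - a)) a False \<sigma> \<tau>"
  by (rule row_partition_eq_row_weight[OF _ _ _ assms])
    (auto simp: omega_Ainv_def Omega_def intro: Omega_nonzero_imp_allowed)

definition stacked_weight :: "'a::field \<Rightarrow> nat \<Rightarrow> int \<Rightarrow> bool \<Rightarrow> bool \<Rightarrow>
    (int \<Rightarrow> bool) \<Rightarrow> (int \<Rightarrow> bool) \<Rightarrow> 'a fps" where
  "stacked_weight t n p h g \<sigma> \<sigma>' = (\<Sum>\<tau>\<in>agree_outside {p..<p+int n} \<sigma>'.
     row_weight (omega_Ainv t) n p h \<sigma> \<tau> * row_weight (omega_A t) n p g \<tau> \<sigma>')"

lemma stacked_weight_Suc: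
  "stacked_weight t (Suc n) p h g \<sigma> \<sigma>' = (\<Sum>c\<in>UNIV. \<Sum>e\<in>UNIV. \<Sum>f\<in>UNIV.
     omega_Ainv t h (\<sigma> p) e c * omega_A t g c f (\<sigma>' p) * stacked_weight t n (p+1) e f \<sigma> \<sigma>')"
proof -
  let ?S = "{p+1..<(p+1) + int n}"
  define G where "G c \<tau> = (\<Sum>e\<in>UNIV. \<Sum>f\<in>UNIV. omega_Ainv t h (\<sigma> p) e c * omega_A t g c f (\<sigma>' p) *
    (row_weight (omega_Ainv t) n (p+1) e \<sigma> \<tau> * row_weight (omega_A t) n (p+1) f \<tau> \<sigma>'))" for c \<tau>
  have "stacked_weight t (Suc n) p h g \<sigma> \<sigma>' = (\<Sum>c\<in>UNIV. \<Sum>\<tau>\<in>agree_outside ?S (\<sigma>'(p := c)).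
      row_weight (omega_Ainv t) (Suc n) p h \<sigma> \<tau> * row_weight (omega_A t) (Suc n) p g \<tau> \<sigma>')"
    unfolding stacked_weight_def atLeastLessThan_Suc_insert by (rule sum_agree_outside_insert) auto
  also have "\<dots> = (\<Sum>c\<in>UNIV. \<Sum>\<tau>\<in>agree_outside ?S (\<sigma>'(p := c)). G c \<tau>)"
  proof (intro sum.cong refl)
    fix c \<tau> assume "\<tau> \<in> agree_outside ?S (\<sigma>'(p := c))"
    then have "\<tau> p = c" by (auto simp: agree_outside_def)
    then show "row_weight (omega_Ainv t) (Suc n) p h \<sigma> \<tau> * row_weight (omega_A t) (Suc n) p g \<tau> \<sigma>' = G c \<tau>"
      unfolding row_weight_Suc_sum sum_product G_def by (simp add: mult_ac)
  qed
  also have "\<dots> = (\<Sum>c\<in>UNIV. \<Sum>\<tau>\<in>agree_outside ?S \<sigma>'. G c \<tau>)"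
    by (intro sum.cong refl sum_agree_outside_upd)
      (auto simp: G_def row_weight_upd_top row_weight_upd_bottom)
  also have "\<dots> = (\<Sum>c\<in>UNIV. \<Sum>e\<in>UNIV. \<Sum>f\<in>UNIV.
     omega_Ainv t h (\<sigma> p) e c * omega_A t g c f (\<sigma>' p) * stacked_weight t n (p+1) e f \<sigma> \<sigma>')"
    unfolding G_def stacked_weight_def sum_distrib_left
    by (simp add: sum.swap[where A = "agree_outside _ _"])
  finally show ?thesis .
qed

lemma fps_X_mult_const_split:
  "fps_X * (fps_const t * P) + fps_X * (fps_const (1 - t) * P) = fps_X * (P :: 'a::field fps)"
proof -
  have "fps_const t * P + fps_const (1 - t) * P = (fps_const t + fps_const (1 - t)) * P"
    by (simp only: distrib_right)
  also have "fps_const t + fps_const (1 - t) = 1" by simp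
  finally show ?thesis
    by (metis distrib_left mult_1)
qed

text \<open>The second conjunct, an edge entering the upper row weighs as much as one entering the
  lower row, is the invariant that carries the induction over the sites.\<close>
lemma stacked_weight_cancel:
  "stacked_weight t n p False False \<sigma> \<sigma>' = (if \<forall>k\<in>{p..<p+int n}. \<sigma> k = \<sigma>' k then 1 else 0)
   \<and> stacked_weight t n p False True \<sigma> \<sigma>' = stacked_weight t n p True False \<sigma> \<sigma>'"
proof (induction n arbitrary: p)
  case 0
  then show ?case by (simp add: stacked_weight_def)
next
  case (Suc n)
  have IH0: "stacked_weight t n (1+p) False False \<sigma> \<sigma>' =
      (if \<forall>k\<in>{p+1..<p+1+int n}. \<sigma> k = \<sigma>' k then 1 else 0)"
   and IH1: "stacked_weight t n (1+p) False True \<sigma> \<sigma>' = stacked_weight t n (1+p) True False \<sigma> \<sigma>'"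
    using Suc.IH[of "p+1"] by (auto simp: add.commute)
  have "(\<forall>k\<in>{p..<p+int (Suc n)}. \<sigma> k = \<sigma>' k) \<longleftrightarrow>
      \<sigma> p = \<sigma>' p \<and> (\<forall>k\<in>{p+1..<p+1+int n}. \<sigma> k = \<sigma>' k)"
    unfolding atLeastLessThan_Suc_insert by auto
  then show ?case
    unfolding stacked_weight_Suc
    by (cases "\<sigma> p"; cases "\<sigma>' p") (simp_all add: UNIV_bool omega_Ainv_def omega_A_def Omega_def
        algebra_simps fps_X_mult_const_split IH0 IH1)
qed

section \<open>Expanding A(x;t) into particle jumps\<close>

definition count_above :: "int \<Rightarrow> (int \<Rightarrow> bool) \<Rightarrow> nat" where
  "count_above i \<tau> = card {j. i < j \<and> \<tau> j}"

text \<open>The factor E_ij moves a particle from i to j, so the coefficient of \<tau> in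
  E_{i1 j1} \<cdots> E_{ir jr} v is read off v at chain_preimage ps \<tau>, obtained by undoing the
  jumps from left to right; chain_applicable says that each of them can be undone.\<close>
fun chain_applicable :: "(int \<times> int) list \<Rightarrow> (int \<Rightarrow> bool) \<Rightarrow> bool" where
  "chain_applicable [] \<tau> = True"
| "chain_applicable ((i, j) # ps) \<tau> =
     (\<not> \<tau> i \<and> \<tau> j \<and> chain_applicable ps (\<tau>(i := True, j := False)))"

fun chain_preimage :: "(int \<times> int) list \<Rightarrow> (int \<Rightarrow> bool) \<Rightarrow> (int \<Rightarrow> bool)" where
  "chain_preimage [] \<tau> = \<tau>"
| "chain_preimage ((i, j) # ps) \<tau> = chain_preimage ps (\<tau>(i := True, j := False))"

fun chain_coeff :: "'a::field \<Rightarrow> (int \<times> int) list \<Rightarrow> (int \<Rightarrow> bool) \<Rightarrow> 'a" where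
  "chain_coeff t [] \<tau> = 1"
| "chain_coeff t ((i, j) # ps) \<tau> = (1 - t) * inverse ((- t) ^ count_above i \<tau>) *
     (- t) ^ count_above j \<tau> * chain_coeff t ps (\<tau>(i := True, j := False))"

fun chain_deg_nat :: "(int \<times> int) list \<Rightarrow> nat" where
  "chain_deg_nat [] = 0"
| "chain_deg_nat ((i, j) # ps) = nat (j - i) + chain_deg_nat ps"

lemma E_op_apply:
  assumes "i < j"
  shows "E_op t i j w \<tau> = (if \<not> \<tau> i \<and> \<tau> j then (1 - t) * inverse ((- t) ^ count_above i \<tau>) *
    (- t) ^ count_above j \<tau> * w (\<tau>(i := True, j := False)) else 0)"
proof -
  have "{k. j < k \<and> (\<tau>(i := True)) k} = {k. j < k \<and> \<tau> k}"
    using assms by auto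
  then show ?thesis
    using assms unfolding E_op_def psi_minus_def psi_plus_def count_above_def by auto
qed

lemma E_prod_apply:
  "\<forall>(i, j)\<in>set ps. i < j \<Longrightarrow>
    E_prod t ps v \<tau> = (if chain_applicable ps \<tau> then chain_coeff t ps \<tau> * v (chain_preimage ps \<tau>) else 0)"
proof (induction ps arbitrary: \<tau>)
  case Nil
  then show ?case by (simp add: E_prod_def)
next
  case (Cons ij ps)
  obtain i j where ij: "ij = (i, j)" by force
  have "i < j" and IH: "\<And>\<tau>. E_prod t ps v \<tau> =
      (if chain_applicable ps \<tau> then chain_coeff t ps \<tau> * v (chain_preimage ps \<tau>) else 0)"
    using Cons ij by auto
  have "E_prod t (ij # ps) v = E_op t i j (E_prod t ps v)"
    by (simp add: E_prod_def ij)
  then show ?case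
    unfolding E_op_apply[OF \<open>i < j\<close>] IH ij
    by (cases "\<not> \<tau> i \<and> \<tau> j") (simp_all add: mult.assoc del: fun_upd_apply)
qed

lemma chain_ok_Nil [simp]: "chain_ok []"
  by (simp add: chain_ok_def)

lemma chain_ok_Cons:
  "chain_ok ((i, j) # ps) \<longleftrightarrow> i < j \<and> (\<forall>(i', j')\<in>set ps. j < i' \<and> j < j') \<and> chain_ok ps"
proof -
  have "set (concat (map (\<lambda>(i, j). [i, j]) ps)) = (\<Union>(i, j)\<in>set ps. {i, j})"
    by (induction ps) auto
  then show ?thesis
    unfolding chain_ok_def by auto
qed

lemma chain_ok_less: "chain_ok ps \<Longrightarrow> \<forall>(i, j)\<in>set ps. i < j"
  by (induction ps) (auto simp: chain_ok_Cons)

lemma chain_ok_distinct: "chain_ok ps \<Longrightarrow> distinct ps"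
  by (induction ps) (auto simp: chain_ok_Cons)

lemma chain_deg_eq_chain_deg_nat: "chain_ok ps \<Longrightarrow> chain_deg ps = int (chain_deg_nat ps)"
  by (induction ps) (auto simp: chain_ok_Cons chain_deg_def)

lemma chain_applicable_below:
  "chain_ok ps \<Longrightarrow> chain_applicable ps \<tau> \<Longrightarrow> \<forall>k\<ge>b. \<not> \<tau> k \<Longrightarrow> \<forall>(i, j)\<in>set ps. j < b"
proof (induction ps arbitrary: \<tau>)
  case Nil
  then show ?case by simp
next
  case (Cons ij ps)
  obtain i j where ij: "ij = (i, j)" by force
  have "j < b" "i < j" "chain_ok ps" "chain_applicable ps (\<tau>(i := True, j := False))"
    using Cons.prems ij by (auto simp: chain_ok_Cons not_le[symmetric] simp del: fun_upd_apply)
  moreover from this have "\<forall>k\<ge>b. \<not> (\<tau>(i := True, j := False)) k"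
    using Cons.prems by auto
  ultimately show ?case
    using Cons.IH ij by auto
qed

lemma chain_applicable_above:
  "chain_ok ps \<Longrightarrow> chain_applicable ps \<tau> \<Longrightarrow> \<forall>k<a. \<tau> k \<Longrightarrow> \<forall>(i, j)\<in>set ps. a \<le> i"
proof (induction ps arbitrary: \<tau>)
  case Nil
  then show ?case by simp
next
  case (Cons ij ps)
  obtain i j where ij: "ij = (i, j)" by force
  have "a \<le> i" "i < j" "chain_ok ps" "chain_applicable ps (\<tau>(i := True, j := False))"
    using Cons.prems ij by (auto simp: chain_ok_Cons not_less[symmetric] simp del: fun_upd_apply)
  moreover from this have "\<forall>k<a. (\<tau>(i := True, j := False)) k"
    using Cons.prems by auto
  ultimately show ?case
    using Cons.IH ij by auto
qed

lemma chain_preimage_apply_other: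
  "\<forall>(i, j)\<in>set ps. k \<noteq> i \<and> k \<noteq> j \<Longrightarrow> chain_preimage ps \<tau> k = \<tau> k"
  by (induction ps arbitrary: \<tau>) auto

lemma is_maya_chain_preimage:
  assumes "is_maya (chain_preimage ps \<tau>)"
  shows "is_maya \<tau>"
proof -
  have "{k. chain_preimage ps \<tau> k \<noteq> \<tau> k} \<subseteq> (\<Union>(i, j)\<in>set ps. {i, j})"
    using chain_preimage_apply_other by fastforce
  then have "finite {k. chain_preimage ps \<tau> k \<noteq> \<tau> k}"
    by (rule finite_subset) auto
  then show ?thesis
    by (rule is_maya_finite_diff[OF assms])
qed

definition chains_from :: "int \<Rightarrow> (int \<Rightarrow> bool) \<Rightarrow> (int \<times> int) list set" where
  "chains_from p \<sigma>' = {ps. chain_ok ps \<and> chain_applicable ps \<sigma>' \<and> (\<forall>(i, j)\<in>set ps. p \<le> i)}"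

lemma finite_chains_from:
  assumes "\<forall>k\<ge>b. \<not> \<sigma>' k"
  shows "finite (chains_from p \<sigma>')"
proof -
  have "chains_from p \<sigma>' \<subseteq> {ps. set ps \<subseteq> {p..<b} \<times> {p..<b} \<and> distinct ps}"
  proof
    fix ps assume "ps \<in> chains_from p \<sigma>'"
    then have ps: "chain_ok ps" "chain_applicable ps \<sigma>'" "\<forall>(i, j)\<in>set ps. p \<le> i"
      by (auto simp: chains_from_def)
    then show "ps \<in> {ps. set ps \<subseteq> {p..<b} \<times> {p..<b} \<and> distinct ps}"
      using chain_applicable_below[OF ps(1,2) assms] chain_ok_less[OF ps(1)] chain_ok_distinct[OF ps(1)]
      by fastforce
  qed
  then show ?thesis
    by (rule finite_subset) (intro finite_subset_distinct finite_cartesian_product; simp)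
qed

lemma chains_from_frozen_preimage:
  assumes \<sigma>': "frozen_outside a b \<sigma>'" and ps: "ps \<in> chains_from a \<sigma>'"
  shows "frozen_outside a b (chain_preimage ps \<sigma>')"
proof -
  have ps: "chain_ok ps" "chain_applicable ps \<sigma>'" "\<forall>(i, j)\<in>set ps. a \<le> i"
    using ps by (auto simp: chains_from_def)
  have "\<forall>(i, j)\<in>set ps. j < b"
    by (rule chain_applicable_below[OF ps(1,2)]) (use \<sigma>' in \<open>auto simp: frozen_outside_def\<close>)
  then have "chain_preimage ps \<sigma>' k = \<sigma>' k" if "k < a \<or> b \<le> k" for k
    by (intro chain_preimage_apply_other) (use that ps(3) chain_ok_less[OF ps(1)] in fastforce)
  then show ?thesis
    using \<sigma>' by (auto simp: frozen_outside_def)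
qed

definition chain_term :: "'a::field \<Rightarrow> (int \<times> int) list \<Rightarrow> (int \<Rightarrow> bool) \<Rightarrow> 'a fps" where
  "chain_term t ps \<tau> = fps_const (t ^ chain_deg_nat ps * chain_coeff t ps \<tau>) * fps_X ^ chain_deg_nat ps"

definition jump_coeff :: "'a::field \<Rightarrow> int \<Rightarrow> int \<Rightarrow> (int \<Rightarrow> bool) \<Rightarrow> 'a" where
  "jump_coeff t i j \<tau> =
     t ^ nat (j - i) * ((1 - t) * inverse ((- t) ^ count_above i \<tau>) * (- t) ^ count_above j \<tau>)"

definition passing_coeff :: "'a::field \<Rightarrow> int \<Rightarrow> int \<Rightarrow> (int \<Rightarrow> bool) \<Rightarrow> 'a" where
  "passing_coeff t p j \<tau> = (\<Prod>k\<in>{p..<j}. if \<tau> k then -1 else t)"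

lemma chain_term_Cons:
  "chain_term t ((i, j) # ps) \<tau> =
     fps_const (jump_coeff t i j \<tau>) * fps_X ^ nat (j - i) * chain_term t ps (\<tau>(i := True, j := False))"
  unfolding chain_term_def jump_coeff_def by (simp add: power_add mult_ac flip: fps_const_mult)

lemma count_above_eq_Suc:
  assumes "\<forall>k\<ge>b. \<not> \<tau> k"
  shows "count_above p \<tau> = count_above (p+1) \<tau> + (if \<tau> (p+1) then 1 else 0)"
proof -
  have "finite {j. p + 1 < j \<and> \<tau> j}"
    by (rule finite_subset[of _ "{p+1..<b}"]) (use assms in \<open>auto simp: not_le[symmetric]\<close>)
  moreover have "{j. p < j \<and> \<tau> j} = (if \<tau> (p+1) then insert (p+1) else id) {j. p + 1 < j \<and> \<tau> j}"
    by (auto simp: order_less_le zless_iff_Suc_zadd)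
  ultimately show ?thesis
    by (simp add: count_above_def)
qed

text \<open>The signs (-t)^(...) of a jump telescope: a site passed over contributes -1 if it is
  occupied and t if it is empty.\<close>
lemma jump_coeff_eq_passing_coeff:
  assumes t: "t \<noteq> 0" and b: "\<forall>k\<ge>b. \<not> \<tau> k" and j: "\<tau> j"
  shows "p < j \<Longrightarrow> jump_coeff t p j \<tau> = - (1 - t) * passing_coeff t (p+1) j \<tau>"
proof (induction "nat (j - p - 1)" arbitrary: p)
  case 0
  then have "j = p + 1" by auto
  moreover have "count_above p \<tau> = count_above j \<tau> + 1"
    using count_above_eq_Suc[OF b, of p] j \<open>j = p + 1\<close> by simp
  ultimately show ?case
    using t by (simp add: jump_coeff_def passing_coeff_def field_simps)
next
  case (Suc d)
  then have pj: "p + 1 < j" by auto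
  have IH: "jump_coeff t (p+1) j \<tau> = - (1 - t) * passing_coeff t (p+2) j \<tau>"
    using Suc.hyps(1)[of "p+1"] Suc.hyps(2) pj by (simp add: add.assoc)
  have "nat (j - p) = Suc (nat (j - (p + 1)))"
    using pj by auto
  then have "jump_coeff t p j \<tau> = (if \<tau> (p+1) then -1 else t) * jump_coeff t (p+1) j \<tau>"
    unfolding jump_coeff_def count_above_eq_Suc[OF b, of p]
    using t by (cases "\<tau> (p+1)") (simp_all add: field_simps)
  also have "\<dots> = - (1 - t) * passing_coeff t (p+1) j \<tau>"
  proof -
    have "{p+1..<j} = insert (p+1) {p+2..<j}"
      using pj by auto
    then show ?thesis
      unfolding IH passing_coeff_def by (simp add: mult_ac)
  qed
  finally show ?case .
qed

lemma jump_term_eq: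
  assumes "t \<noteq> 0" "\<forall>k\<ge>b. \<not> \<tau> k" "\<tau> j" "p < j"
  shows "fps_const (jump_coeff t p j \<tau>) * fps_X ^ nat (j - p) =
    - (fps_const (1 - t) * fps_X) * (fps_const (passing_coeff t (p+1) j \<tau>) * fps_X ^ nat (j - (p+1)))"
proof -
  have "nat (j - p) = Suc (nat (j - (p+1)))"
    using assms(4) by auto
  moreover have "fps_const (t - 1) = - fps_const (1 - t)"
    by simp
  ultimately show ?thesis
    using jump_coeff_eq_passing_coeff[OF assms] by (simp add: mult_ac flip: fps_const_mult fps_const_neg)
qed

text \<open>The matrix element of A(x;t) f at \<sigma>', restricted to jumps starting at p or later.\<close>
definition chain_action :: "'a::field \<Rightarrow> int \<Rightarrow> (int \<Rightarrow> bool) \<Rightarrow> ((int \<Rightarrow> bool) \<Rightarrow> 'a fps) \<Rightarrow> 'a fps" where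
  "chain_action t p \<sigma>' f = (\<Sum>ps\<in>chains_from p \<sigma>'. chain_term t ps \<sigma>' * f (chain_preimage ps \<sigma>'))"

text \<open>The same with one more jump, which started left of p and lands at some j \<ge> p.\<close>
definition open_chain_action :: "'a::field \<Rightarrow> int \<Rightarrow> int \<Rightarrow> (int \<Rightarrow> bool) \<Rightarrow>
    ((int \<Rightarrow> bool) \<Rightarrow> 'a fps) \<Rightarrow> 'a fps" where
  "open_chain_action t b p \<sigma>' f = (\<Sum>j\<in>{p..<b}. if \<sigma>' j
     then fps_const (passing_coeff t p j \<sigma>') * fps_X ^ nat (j - p) * chain_action t (j+1) (\<sigma>'(j := False)) f
     else 0)"

definition row_action :: "'a::field \<Rightarrow> nat \<Rightarrow> int \<Rightarrow> bool \<Rightarrow> (int \<Rightarrow> bool) \<Rightarrow>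
    ((int \<Rightarrow> bool) \<Rightarrow> 'a fps) \<Rightarrow> 'a fps" where
  "row_action t n p g \<sigma>' f =
     (\<Sum>\<tau>\<in>agree_outside {p..<p+int n} \<sigma>'. row_weight (omega_A t) n p g \<tau> \<sigma>' * f \<tau>)"

definition travel_weight :: "'a::field \<Rightarrow> bool \<Rightarrow> 'a fps" where
  "travel_weight t s = (if s then - fps_X else fps_const t * fps_X)"

lemma row_action_0: "row_action t 0 p g \<sigma>' f = (if g then 0 else f \<sigma>')"
  by (simp add: row_action_def)

lemma row_action_Suc:
  "row_action t (Suc n) p g \<sigma>' f =
     (\<Sum>c\<in>UNIV. \<Sum>e\<in>UNIV. omega_A t g c e (\<sigma>' p) * row_action t n (p+1) e (\<sigma>'(p := c)) f)"
proof -
  let ?S = "{p+1..<(p+1) + int n}"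
  have "row_action t (Suc n) p g \<sigma>' f = (\<Sum>c\<in>UNIV. \<Sum>\<tau>\<in>agree_outside ?S (\<sigma>'(p := c)).
      row_weight (omega_A t) (Suc n) p g \<tau> \<sigma>' * f \<tau>)"
    unfolding row_action_def atLeastLessThan_Suc_insert by (rule sum_agree_outside_insert) auto
  also have "\<dots> = (\<Sum>c\<in>UNIV. \<Sum>\<tau>\<in>agree_outside ?S (\<sigma>'(p := c)). \<Sum>e\<in>UNIV.
      omega_A t g c e (\<sigma>' p) * (row_weight (omega_A t) n (p+1) e \<tau> (\<sigma>'(p := c)) * f \<tau>))"
  proof (intro sum.cong refl)
    fix c \<tau> assume "\<tau> \<in> agree_outside ?S (\<sigma>'(p := c))"
    then have "\<tau> p = c" by (auto simp: agree_outside_def)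
    then show "row_weight (omega_A t) (Suc n) p g \<tau> \<sigma>' * f \<tau> = (\<Sum>e\<in>UNIV.
        omega_A t g c e (\<sigma>' p) * (row_weight (omega_A t) n (p+1) e \<tau> (\<sigma>'(p := c)) * f \<tau>))"
      unfolding row_weight_Suc_sum sum_distrib_right by (simp add: row_weight_upd_bottom mult_ac)
  qed
  also have "\<dots> = (\<Sum>c\<in>UNIV. \<Sum>e\<in>UNIV. omega_A t g c e (\<sigma>' p) * row_action t n (p+1) e (\<sigma>'(p := c)) f)"
    unfolding row_action_def sum_distrib_left by (simp add: sum.swap[where A = "agree_outside _ _"])
  finally show ?thesis .
qed

lemma row_action_Suc_closed:
  "row_action t (Suc n) p False \<sigma>' f = row_action t n (p+1) False \<sigma>' f
     + (if \<sigma>' p then 0 else - (fps_const (1 - t) * fps_X) * row_action t n (p+1) True (\<sigma>'(p := True)) f)"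
  by (cases "\<sigma>' p") (simp_all add: row_action_Suc UNIV_bool omega_A_def Omega_def fun_upd_idem)

lemma row_action_Suc_open:
  "row_action t (Suc n) p True \<sigma>' f = travel_weight t (\<sigma>' p) * row_action t n (p+1) True \<sigma>' f
     + (if \<sigma>' p then row_action t n (p+1) False (\<sigma>'(p := False)) f else 0)"
  by (cases "\<sigma>' p") (simp_all add: row_action_Suc UNIV_bool omega_A_def Omega_def travel_weight_def fun_upd_idem)

lemma Cons_in_chains_from_iff:
  "(i, j) # ps \<in> chains_from p \<sigma>' \<longleftrightarrow>
    p \<le> i \<and> i < j \<and> \<not> \<sigma>' i \<and> \<sigma>' j \<and> ps \<in> chains_from (j+1) (\<sigma>'(i := True, j := False))"
proof -
  have "(\<forall>(i', j')\<in>set ps. j < i' \<and> j < j') \<longleftrightarrow> (\<forall>(i', j')\<in>set ps. j + 1 \<le> i')" if "chain_ok ps"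
    using chain_ok_less[OF that] by fastforce
  then show ?thesis
    unfolding chains_from_def by (fastforce simp: chain_ok_Cons simp del: fun_upd_apply)
qed

lemma chains_from_split:
  assumes b: "\<forall>k\<ge>b. \<not> \<sigma>' k"
  shows "chains_from p \<sigma>' = chains_from (p+1) \<sigma>' \<union> (if \<sigma>' p then {} else
    (\<lambda>(j, ps). (p, j) # ps) ` (SIGMA j:{j\<in>{p+1..<b}. \<sigma>' j}. chains_from (j+1) (\<sigma>'(p := True, j := False))))"
    (is "?L = ?R")
proof
  show "?L \<subseteq> ?R"
  proof
    fix ps assume ps: "ps \<in> ?L"
    show "ps \<in> ?R"
    proof (cases ps)
      case Nil
      then show ?thesis by (simp add: chains_from_def)
    next
      case (Cons ij ps')
      obtain i j where ij: "ij = (i, j)" by force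
      have "p \<le> i" "i < j" "\<not> \<sigma>' i" "\<sigma>' j" "ps' \<in> chains_from (j+1) (\<sigma>'(i := True, j := False))"
        using ps Cons ij by (simp_all add: Cons_in_chains_from_iff)
      moreover have "j < b"
        using b \<open>\<sigma>' j\<close> by (meson not_le)
      ultimately show ?thesis
        using Cons ij by (cases "i = p") (force simp: Cons_in_chains_from_iff)+
    qed
  qed
next
  have "chains_from (p+1) \<sigma>' \<subseteq> chains_from p \<sigma>'"
    by (auto simp: chains_from_def)
  moreover have "(p, j) # ps \<in> chains_from p \<sigma>'" if "\<not> \<sigma>' p" "j \<in> {p+1..<b}" "\<sigma>' j"
    "ps \<in> chains_from (j+1) (\<sigma>'(p := True, j := False))" for j ps
    using that by (simp add: Cons_in_chains_from_iff)
  ultimately show "?R \<subseteq> ?L"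
    by auto
qed

lemma sum_chains_first_jump:
  fixes p b :: int and \<sigma>' :: "int \<Rightarrow> bool"
  assumes b: "\<forall>k\<ge>b. \<not> \<sigma>' k" and t: "t \<noteq> 0"
  defines "J \<equiv> {j\<in>{p+1..<b}. \<sigma>' j}"
  defines "C \<equiv> \<lambda>j. chains_from (j+1) (\<sigma>'(p := True, j := False))"
  shows "(\<Sum>ps\<in>(\<lambda>(j, ps). (p, j) # ps) ` (SIGMA j:J. C j). chain_term t ps \<sigma>' * f (chain_preimage ps \<sigma>'))
    = - (fps_const (1 - t) * fps_X) * open_chain_action t b (p+1) (\<sigma>'(p := True)) f"
proof -
  have finC: "finite (C j)" if "j \<in> J" for j
    unfolding C_def by (rule finite_chains_from[of b]) (use b that in \<open>auto simp: J_def\<close>)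
  have "finite J"
    unfolding J_def by (rule finite_subset[of _ "{p+1..<b}"]) auto
  have "inj_on (\<lambda>(j, ps). (p, j) # ps) (SIGMA j:J. C j)"
    by (auto simp: inj_on_def)
  then have "(\<Sum>ps\<in>(\<lambda>(j, ps). (p, j) # ps) ` (SIGMA j:J. C j). chain_term t ps \<sigma>' * f (chain_preimage ps \<sigma>'))
      = (\<Sum>(j, ps)\<in>(SIGMA j:J. C j). chain_term t ((p, j) # ps) \<sigma>' * f (chain_preimage ((p, j) # ps) \<sigma>'))"
    by (simp add: sum.reindex case_prod_unfold)
  also have "\<dots> = (\<Sum>j\<in>J. \<Sum>ps\<in>C j. chain_term t ((p, j) # ps) \<sigma>' * f (chain_preimage ((p, j) # ps) \<sigma>'))"
    by (rule sum.Sigma[symmetric]) (use finC \<open>finite J\<close> in auto)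
  also have "\<dots> = (\<Sum>j\<in>J. fps_const (jump_coeff t p j \<sigma>') * fps_X ^ nat (j - p) *
      chain_action t (j+1) (\<sigma>'(p := True, j := False)) f)"
    unfolding chain_action_def chain_term_Cons chain_preimage.simps C_def
    by (simp add: sum_distrib_left mult.assoc)
  also have "\<dots> = (\<Sum>j\<in>J. - (fps_const (1 - t) * fps_X) * (fps_const (passing_coeff t (p+1) j \<sigma>') *
      fps_X ^ nat (j - (p+1)) * chain_action t (j+1) (\<sigma>'(p := True, j := False)) f))"
    using jump_term_eq[OF t b] by (intro sum.cong refl) (simp add: J_def mult.assoc)
  also have "\<dots> = - (fps_const (1 - t) * fps_X) * open_chain_action t b (p+1) (\<sigma>'(p := True)) f"
  proof -
    have "passing_coeff t (p+1) j (\<sigma>'(p := True)) = passing_coeff t (p+1) j \<sigma>'" for j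
      unfolding passing_coeff_def by (rule prod.cong) auto
    then have "open_chain_action t b (p+1) (\<sigma>'(p := True)) f = (\<Sum>j\<in>{p+1..<b}. if \<sigma>' j
        then fps_const (passing_coeff t (p+1) j \<sigma>') * fps_X ^ nat (j - (p+1)) *
          chain_action t (j+1) (\<sigma>'(p := True, j := False)) f else 0)"
      unfolding open_chain_action_def by (intro sum.cong) auto
    also have "\<dots> = (\<Sum>j\<in>J. fps_const (passing_coeff t (p+1) j \<sigma>') * fps_X ^ nat (j - (p+1)) *
        chain_action t (j+1) (\<sigma>'(p := True, j := False)) f)"
      unfolding J_def by (rule sum.inter_filter[symmetric]) simp
    finally show ?thesis
      by (simp add: sum_distrib_left)
  qed
  finally show ?thesis .
qed

lemma chain_action_split:
  assumes b: "\<forall>k\<ge>b. \<not> \<sigma>' k" and t: "t \<noteq> 0"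
  shows "chain_action t p \<sigma>' f = chain_action t (p+1) \<sigma>' f
     + (if \<sigma>' p then 0 else - (fps_const (1 - t) * fps_X) * open_chain_action t b (p+1) (\<sigma>'(p := True)) f)"
proof (cases "\<sigma>' p")
  case True
  then show ?thesis
    unfolding chain_action_def by (subst chains_from_split[OF b]) simp
next
  case False
  let ?J = "{j\<in>{p+1..<b}. \<sigma>' j}"
  let ?C = "\<lambda>j. chains_from (j+1) (\<sigma>'(p := True, j := False))"
  have "finite ?J"
    by (rule finite_subset[of _ "{p+1..<b}"]) auto
  then have "finite (SIGMA j:?J. ?C j)"
    using b by (intro finite_SigmaI finite_chains_from[of b]) auto
  moreover have "chains_from (p+1) \<sigma>' \<inter> (\<lambda>(j, ps). (p, j) # ps) ` (SIGMA j:?J. ?C j) = {}"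
    by (auto simp: chains_from_def)
  ultimately show ?thesis
    unfolding chain_action_def chains_from_split[OF b, of p]
    using False finite_chains_from[OF b] sum_chains_first_jump[OF b t]
    by (simp add: sum.union_disjoint chain_action_def)
qed

lemma open_chain_action_split:
  assumes "p < b"
  shows "open_chain_action t b p \<sigma>' f =
    (if \<sigma>' p then chain_action t (p+1) (\<sigma>'(p := False)) f else 0)
    + travel_weight t (\<sigma>' p) * open_chain_action t b (p+1) \<sigma>' f"
proof -
  have "open_chain_action t b p \<sigma>' f = (if \<sigma>' p then chain_action t (p+1) (\<sigma>'(p := False)) f else 0)
     + (\<Sum>j\<in>{p+1..<b}. if \<sigma>' j then fps_const (passing_coeff t p j \<sigma>') * fps_X ^ nat (j - p) *
         chain_action t (j+1) (\<sigma>'(j := False)) f else 0)"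
  proof -
    have "{p..<b} = insert p {p+1..<b}"
      using assms by auto
    then show ?thesis
      unfolding open_chain_action_def by (simp add: passing_coeff_def)
  qed
  also have "(\<Sum>j\<in>{p+1..<b}. if \<sigma>' j then fps_const (passing_coeff t p j \<sigma>') * fps_X ^ nat (j - p) *
         chain_action t (j+1) (\<sigma>'(j := False)) f else 0)
     = travel_weight t (\<sigma>' p) * open_chain_action t b (p+1) \<sigma>' f"
    unfolding open_chain_action_def sum_distrib_left
  proof (rule sum.cong[OF refl])
    fix j assume j: "j \<in> {p+1..<b}"
    have "{p..<j} = insert p {p+1..<j}"
      using j by auto
    then have "passing_coeff t p j \<sigma>' = (if \<sigma>' p then -1 else t) * passing_coeff t (p+1) j \<sigma>'"
      unfolding passing_coeff_def by simp
    moreover have "nat (j - p) = Suc (nat (j - (p+1)))"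
      using j by auto
    ultimately show "(if \<sigma>' j then fps_const (passing_coeff t p j \<sigma>') * fps_X ^ nat (j - p) *
         chain_action t (j+1) (\<sigma>'(j := False)) f else 0) =
      travel_weight t (\<sigma>' p) * (if \<sigma>' j then fps_const (passing_coeff t (p+1) j \<sigma>') *
         fps_X ^ nat (j - (p+1)) * chain_action t (j+1) (\<sigma>'(j := False)) f else 0)"
      by (cases "\<sigma>' p") (simp_all add: travel_weight_def mult_ac flip: fps_const_mult fps_const_neg)
  qed
  finally show ?thesis .
qed

lemma chain_action_at_top:
  assumes "\<forall>k\<ge>b. \<not> \<sigma>' k"
  shows "chain_action t b \<sigma>' f = f \<sigma>'"
proof -
  have "chains_from b \<sigma>' = {[]}"
  proof (intro equalityI subsetI)
    fix ps assume "ps \<in> chains_from b \<sigma>'"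
    then have ps: "chain_ok ps" "chain_applicable ps \<sigma>'" "\<forall>(i, j)\<in>set ps. b \<le> i"
      by (auto simp: chains_from_def)
    then have "\<forall>(i, j)\<in>set ps. j < b \<and> i < j \<and> b \<le> i"
      using chain_applicable_below[OF ps(1,2) assms] chain_ok_less[OF ps(1)] by fast
    then show "ps \<in> {[]}"
      by (cases ps) auto
  qed (simp add: chains_from_def)
  then show ?thesis
    by (simp add: chain_action_def chain_term_def)
qed

lemma chain_action_eq_row_action:
  assumes "t \<noteq> 0" and "\<forall>k\<ge>p + int n. \<not> \<sigma>' k"
  shows "chain_action t p \<sigma>' f = row_action t n p False \<sigma>' f
    \<and> open_chain_action t (p + int n) p \<sigma>' f = row_action t n p True \<sigma>' f"
  using assms(2)
proof (induction n arbitrary: p \<sigma>')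
  case 0
  then show ?case
    by (simp add: chain_action_at_top row_action_0 open_chain_action_def)
next
  case (Suc n)
  define b where "b = p + int (Suc n)"
  have b: "\<forall>k\<ge>b. \<not> \<sigma>' k" "\<forall>k\<ge>b. \<not> (\<sigma>'(p := c)) k" for c
    using Suc.prems by (auto simp: b_def)
  have IH: "chain_action t (p+1) \<sigma>'' f = row_action t n (p+1) False \<sigma>'' f"
    "open_chain_action t b (p+1) \<sigma>'' f = row_action t n (p+1) True \<sigma>'' f"
    if "\<forall>k\<ge>b. \<not> \<sigma>'' k" for \<sigma>''
    using Suc.IH[of "p+1" \<sigma>''] that by (simp_all add: b_def add.assoc)
  have "p < b"
    by (simp add: b_def)
  show ?case
    unfolding b_def[symmetric] chain_action_split[OF b(1) assms(1), of p]
      open_chain_action_split[OF \<open>p < b\<close>] row_action_Suc_closed row_action_Suc_open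
    using IH[OF b(1)] IH[OF b(2)] by (simp del: fun_upd_apply)
qed

section \<open>The inverse of A(x;t)\<close>

lemma A_coeff_eq_sum_chains:
  assumes \<sigma>': "frozen_outside a b \<sigma>'"
  shows "A_coeff t m v \<sigma>' = (\<Sum>ps\<in>chains_from a \<sigma>'. if chain_deg_nat ps = m
    then t ^ m * (chain_coeff t ps \<sigma>' * v (chain_preimage ps \<sigma>')) else 0)"
proof -
  have below: "\<forall>k<a. \<sigma>' k" and above: "\<forall>k\<ge>b. \<not> \<sigma>' k"
    using \<sigma>' by (auto simp: frozen_outside_def)
  have "A_coeff t m v \<sigma>' = (\<Sum>ps\<in>chains_from a \<sigma>'.
      if chain_ok ps \<and> chain_deg ps = int m then t ^ m * E_prod t ps v \<sigma>' else 0)"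
    unfolding A_coeff_def
  proof (rule Sum_any.expand_superset[OF finite_chains_from[OF above]], rule subsetI)
    fix ps assume "ps \<in> {ps. (if chain_ok ps \<and> chain_deg ps = int m then t ^ m * E_prod t ps v \<sigma>' else 0) \<noteq> 0}"
    then have ok: "chain_ok ps" and "E_prod t ps v \<sigma>' \<noteq> 0"
      by (auto split: if_splits)
    then have "chain_applicable ps \<sigma>'"
      unfolding E_prod_apply[OF chain_ok_less[OF ok]] by (auto split: if_splits)
    then show "ps \<in> chains_from a \<sigma>'"
      using ok chain_applicable_above[OF ok _ below] by (simp add: chains_from_def)
  qed
  also have "\<dots> = (\<Sum>ps\<in>chains_from a \<sigma>'. if chain_deg_nat ps = m
      then t ^ m * (chain_coeff t ps \<sigma>' * v (chain_preimage ps \<sigma>')) else 0)"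
    by (intro sum.cong refl)
      (auto simp: chains_from_def chain_deg_eq_chain_deg_nat E_prod_apply[OF chain_ok_less])
  finally show ?thesis .
qed

lemma A_coeff_0: "A_coeff t 0 v = v"
proof
  fix \<sigma>'
  have "A_coeff t 0 v \<sigma>' = (\<Sum>ps\<in>{[]}. if chain_ok ps \<and> chain_deg ps = int 0 then t ^ 0 * E_prod t ps v \<sigma>' else 0)"
    unfolding A_coeff_def
  proof (rule Sum_any.expand_superset[OF finite.insertI[OF finite.emptyI]], rule subsetI)
    fix ps assume "ps \<in> {ps. (if chain_ok ps \<and> chain_deg ps = int 0 then t ^ 0 * E_prod t ps v \<sigma>' else 0) \<noteq> 0}"
    then have ok: "chain_ok ps" and "chain_deg_nat ps = 0"
      using chain_deg_eq_chain_deg_nat by (auto split: if_splits)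
    then show "ps \<in> {[]}"
      using chain_ok_less[OF ok] by (cases ps) auto
  qed
  then show "A_coeff t 0 v \<sigma>' = v \<sigma>'"
    by (simp add: chain_deg_def E_prod_def)
qed

lemma A_coeff_nonmaya:
  assumes "\<not> is_maya \<sigma>'" and v: "\<And>\<tau>. \<not> is_maya \<tau> \<Longrightarrow> v \<tau> = 0"
  shows "A_coeff t m v \<sigma>' = 0"
proof -
  have "E_prod t ps v \<sigma>' = 0" if "chain_ok ps" for ps
  proof -
    have "\<not> is_maya (chain_preimage ps \<sigma>')"
      using assms(1) is_maya_chain_preimage by blast
    then show ?thesis
      by (simp add: E_prod_apply[OF chain_ok_less[OF that]] v)
  qed
  then have "(if chain_ok ps \<and> chain_deg ps = int m then t ^ m * E_prod t ps v \<sigma>' else 0) = 0" for ps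
    by simp
  then show ?thesis
    by (simp add: A_coeff_def)
qed

lemma sum_if_eq_diff:
  fixes N :: nat
  shows "(\<Sum>k\<le>N. if d = N - k then F k else 0) = (if d \<le> N then F (N - d) else (0::'b::comm_monoid_add))"
proof (cases "d \<le> N")
  case True
  then have "(\<Sum>k\<le>N. if d = N - k then F k else 0) = (\<Sum>k\<le>N. if k = N - d then F k else 0)"
    by (intro sum.cong) auto
  then show ?thesis
    using True by (simp add: sum.delta)
next
  case False
  then show ?thesis
    by (intro trans[OF sum.neutral]) auto
qed

lemma A_coeff_convolution:
  assumes "frozen_outside a b \<sigma>'"
  shows "(\<Sum>k\<le>N. A_coeff t (N - k) (\<lambda>\<tau>. fps_nth (G \<tau>) k) \<sigma>') = fps_nth (chain_action t a \<sigma>' G) N"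
proof -
  have "(\<Sum>k\<le>N. A_coeff t (N - k) (\<lambda>\<tau>. fps_nth (G \<tau>) k) \<sigma>') =
     (\<Sum>ps\<in>chains_from a \<sigma>'. \<Sum>k\<le>N. if chain_deg_nat ps = N - k
       then t ^ (N - k) * (chain_coeff t ps \<sigma>' * fps_nth (G (chain_preimage ps \<sigma>')) k) else 0)"
    by (simp add: A_coeff_eq_sum_chains[OF assms] sum.swap[of _ "{..N}"])
  also have "\<dots> = (\<Sum>ps\<in>chains_from a \<sigma>'. fps_nth (chain_term t ps \<sigma>' * G (chain_preimage ps \<sigma>')) N)"
  proof (rule sum.cong[OF refl])
    fix ps
    show "(\<Sum>k\<le>N. if chain_deg_nat ps = N - k
        then t ^ (N - k) * (chain_coeff t ps \<sigma>' * fps_nth (G (chain_preimage ps \<sigma>')) k) else 0) =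
      fps_nth (chain_term t ps \<sigma>' * G (chain_preimage ps \<sigma>')) N"
      unfolding sum_if_eq_diff chain_term_def by (simp add: mult.assoc fps_X_power_mult_nth)
  qed
  also have "\<dots> = fps_nth (chain_action t a \<sigma>' G) N"
    by (simp add: chain_action_def fps_sum_nth)
  finally show ?thesis .
qed

text \<open>A(x;t) B(x;t) = 1 determines the coefficients of B(x;t) = A^{-1}(x;t), because the
  constant coefficient of A(x;t) is the identity.\<close>
lemma Ainv_coeff_unique:
  assumes "\<And>N \<tau>. (\<Sum>k\<le>N. A_coeff t (N - k) (g k) \<tau>) = (if N = 0 then v \<tau> else 0)"
  shows "Ainv_coeff t n v = g n"
proof (induction n rule: less_induct)
  case (less n)
  show ?case
  proof (cases n)
    case 0
    then show ?thesis
      using assms[of 0] by (simp add: A_coeff_0 fun_eq_iff)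
  next
    case (Suc m)
    have "(\<Sum>k\<le>n. F k) = (\<Sum>k<n. F k) + F n" for F :: "nat \<Rightarrow> 'a"
      by (simp only: lessThan_Suc_atMost[symmetric] sum.lessThan_Suc)
    then have "(\<Sum>k<n. A_coeff t (n - k) (g k) \<tau>) + g n \<tau> = 0" for \<tau>
      using assms[of n \<tau>] Suc by (simp add: A_coeff_0)
    then have g: "g n \<tau> = - (\<Sum>k<n. A_coeff t (n - k) (g k) \<tau>)" for \<tau>
      by (metis add.commute eq_neg_iff_add_eq_0)
    show ?thesis
    proof
      fix \<tau>
      have "Ainv_coeff t n v \<tau> = - (\<Sum>k<n. A_coeff t (n - k) (Ainv_coeff t k v) \<tau>)"
        using Suc by simp
      also have "\<dots> = g n \<tau>"
        using less.IH g by simp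
      finally show "Ainv_coeff t n v \<tau> = g n \<tau>" .
    qed
  qed
qed

lemma chain_action_row_partition:
  fixes t :: "'a::field"
  assumes t: "t \<noteq> 0" and \<sigma>: "frozen_outside a b \<sigma>" and \<sigma>': "frozen_outside a b \<sigma>'" and "a \<le> b"
  shows "chain_action t a \<sigma>' (row_partition (omega_Ainv t) \<sigma>) = (if \<sigma> = \<sigma>' then 1 else 0)"
proof -
  let ?n = "nat (b - a)"
  have "chain_action t a \<sigma>' (row_partition (omega_Ainv t) \<sigma>) =
      chain_action t a \<sigma>' (\<lambda>\<tau>. row_weight (omega_Ainv t) ?n a False \<sigma> \<tau>)"
    unfolding chain_action_def
    by (intro sum.cong refl) (simp add: row_partition_omega_Ainv[OF \<sigma> chains_from_frozen_preimage[OF \<sigma>'] \<open>a \<le> b\<close>])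
  also have "\<dots> = row_action t ?n a False \<sigma>' (\<lambda>\<tau>. row_weight (omega_Ainv t) ?n a False \<sigma> \<tau>)"
    using chain_action_eq_row_action[OF t] \<sigma>' \<open>a \<le> b\<close> by (simp add: frozen_outside_def)
  also have "\<dots> = stacked_weight t ?n a False False \<sigma> \<sigma>'"
    unfolding row_action_def stacked_weight_def by (simp add: mult.commute)
  also have "\<dots> = (if \<sigma> = \<sigma>' then 1 else 0)"
    using stacked_weight_cancel[of t ?n a \<sigma> \<sigma>'] frozen_outside_eq_iff[OF \<sigma> \<sigma>'] \<open>a \<le> b\<close> by simp
  finally show ?thesis .
qed

lemma Ainv_coeff_eq_row_partition:
  fixes t :: "'a::field"
  assumes t: "t \<noteq> 0" and \<sigma>: "is_maya \<sigma>"
  shows "Ainv_coeff t n (basis_vec \<sigma>) = (\<lambda>\<tau>. fps_nth (row_partition (omega_Ainv t) \<sigma> \<tau>) n)"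
proof (rule Ainv_coeff_unique)
  fix N \<tau>
  show "(\<Sum>k\<le>N. A_coeff t (N - k) (\<lambda>\<tau>. fps_nth (row_partition (omega_Ainv t) \<sigma> \<tau>) k) \<tau>) =
      (if N = 0 then basis_vec \<sigma> \<tau> else 0)"
  proof (cases "is_maya \<tau>")
    case True
    then obtain a b where "a \<le> b" "frozen_outside a b \<sigma>" "frozen_outside a b \<tau>"
      using maya_common_window[OF \<sigma>] by blast
    then show ?thesis
      by (simp add: A_coeff_convolution chain_action_row_partition[OF t] basis_vec_def)
  next
    case False
    then have "\<sigma> \<noteq> \<tau>"
      using \<sigma> by auto
    then show ?thesis
      using False \<sigma> by (simp add: A_coeff_nonmaya row_partition_nonmaya basis_vec_def)
  qed
qed

lemma t_var_nonzero: "t_var \<noteq> 0"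
  by (simp add: t_var_def Zero_fract_def eq_fract)

theorem corollary4p10:
  fixes \<sigma> \<sigma>' :: "int \<Rightarrow> bool"
  assumes "is_maya \<sigma>" and "is_maya \<sigma>'"
  shows "Ainv_matrix t_var \<sigma>' \<sigma> =
    Sum_any (\<lambda>h. if row_config \<sigma> \<sigma>' h
                   then Prod_any (\<lambda>i. Omega_cor (h (i - 1)) (\<sigma> i) (h i) (\<sigma>' i))
                   else 0)"
proof -
  have "Ainv_matrix t_var \<sigma>' \<sigma> = row_partition Omega_cor \<sigma> \<sigma>'"
    unfolding Ainv_matrix_def Omega_cor_eq_omega_Ainv
    by (simp add: Ainv_coeff_eq_row_partition[OF t_var_nonzero assms(1)] fps_nth_inverse)
  then show ?thesis
    by (simp add: row_partition_def)
qed
end
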